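(* Let $m\ge2$ and let $\mathcal{P}^{OC}_m$ be the set of partial matchings $\pi$ of $[m]$ (set partitions of $[m]$ with all blocks of size at most $2$) having at least one arc, such that every opener of $\pi$ is smaller than every closer of $\pi$, $1$ is an opener and $m$ is a closer (fixed points may occur anywhere strictly between $1$ and $m$). For $\pi\in\mathcal{P}^{OC}_m$ let $c_1<c_2<\dots<c_r$ be the closers of $\pi$, let $\rho_\pi(c_i)=c_{r+1-i}$ and $\rho_\pi(x)=x$ for every other $x\in[m]$, and define $\Phi(\pi)$ to be the partial matching with arcs $\{(a,\rho_\pi(b)):(a,b)\text{ an arc of }\pi\}$ and the same fixed points as $\pi$. Then $\Phi$ is an involution on $\mathcal{P}^{OC}_m$ and for every $t\ge2$, $$\mathrm{ne}_t(\Phi(\pi))=\mathrm{cr}_t(\pi),\qquad \mathrm{cr}_t(\Phi(\pi))=\mathrm{ne}_t(\pi).$$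
   Context: A partial matching of $[m]=\{1,\dots,m\}$ is a set partition of $[m]$ all of whose blocks have size $1$ or $2$. A block $\{i,j\}$ with $i<j$ is written as the arc $(i,j)$; $i$ is called an opener and $j$ a closer. A singleton block $\{i\}$ is called a fixed point. For $t\ge 2$, a $t$-crossing is a set of $t$ arcs $(i_1,j_1),\dots,(i_t,j_t)$ with $i_1<i_2<\dots<i_t<j_1<j_2<\dots<j_t$, and a $t$-nesting is a set of $t$ arcs with $i_1<i_2<\dots<i_t<j_t<j_{t-1}<\dots<j_1$. For a partial matching $\pi$ and $t\ge2$, $\mathrm{cr}_t(\pi)$ and $\mathrm{ne}_t(\pi)$ denote the number of $t$-crossings and of $t$-nestings of $\pi$. *)

theory Defs
  imports Main "HOL-Library.Disjoint_Sets"
begin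

definition partial_matching :: "nat \<Rightarrow> nat set set \<Rightarrow> bool" where
  "partial_matching m P \<longleftrightarrow> partition_on {1..m} P \<and> (\<forall>B\<in>P. card B = 1 \<or> card B = 2)"

definition arcs :: "nat set set \<Rightarrow> (nat \<times> nat) set" where
  "arcs P = {(i, j). i < j \<and> {i, j} \<in> P}"

definition openers :: "nat set set \<Rightarrow> nat set" where
  "openers P = fst ` arcs P"

definition closers :: "nat set set \<Rightarrow> nat set" where
  "closers P = snd ` arcs P"

definition fixed_points :: "nat set set \<Rightarrow> nat set" where
  "fixed_points P = {i. {i} \<in> P}"

definition is_crossing :: "nat set set \<Rightarrow> nat \<Rightarrow> (nat \<times> nat) set \<Rightarrow> bool" where
  "is_crossing P t S \<longleftrightarrow> S \<subseteq> arcs P \<and>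
     (\<exists>a b. S = (\<lambda>k. (a k, b k)) ` {..<t} \<and>
        (\<forall>k. Suc k < t \<longrightarrow> a k < a (Suc k) \<and> b k < b (Suc k)) \<and> a (t - 1) < b 0)"

definition is_nesting :: "nat set set \<Rightarrow> nat \<Rightarrow> (nat \<times> nat) set \<Rightarrow> bool" where
  "is_nesting P t S \<longleftrightarrow> S \<subseteq> arcs P \<and>
     (\<exists>a b. S = (\<lambda>k. (a k, b k)) ` {..<t} \<and>
        (\<forall>k. Suc k < t \<longrightarrow> a k < a (Suc k) \<and> b (Suc k) < b k) \<and> a (t - 1) < b (t - 1))"

definition cr :: "nat \<Rightarrow> nat set set \<Rightarrow> nat" where
  "cr t P = card {S. is_crossing P t S}"

definition ne :: "nat \<Rightarrow> nat set set \<Rightarrow> nat" where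
  "ne t P = card {S. is_nesting P t S}"

definition POC :: "nat \<Rightarrow> nat set set set" where
  "POC m = {P. partial_matching m P \<and> arcs P \<noteq> {} \<and>
              (\<forall>x\<in>openers P. \<forall>c\<in>closers P. x < c) \<and>
              1 \<in> openers P \<and> m \<in> closers P}"

definition rho :: "nat set set \<Rightarrow> nat \<Rightarrow> nat" where
  "rho P x = (let cs = sorted_list_of_set (closers P) in
     if x \<in> closers P then rev cs ! (THE i. i < length cs \<and> cs ! i = x) else x)"

definition Phi :: "nat set set \<Rightarrow> nat set set" where
  "Phi P = {{a, rho P b} | a b. (a, b) \<in> arcs P} \<union> {{x} | x. x \<in> fixed_points P}"

end

theory Submission
  imports Defs
begin

text \<open>
  Write f for the map \<open>rho P\<close>, which reverses the order of the closers of P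
  and fixes every other point.  When every opener of P lies below every closer, f fixes all
  openers and fixed points, so Phi P is simply the image of P under f, blockwise.  Hence Phi P
  is again a partial matching with the same openers and closers, and therefore with the same
  reversal map f; as f is an involution, so is Phi.  On arcs, Phi acts by (a, b) \<mapsto> (a, f b).
  Since f is order-reversing on the closers and all openers precede all closers, this map sends
  t-crossings of P to t-nestings of Phi P and vice versa, giving the equalities of statistics.
\<close>

definition reverse_order :: "'a::linorder set \<Rightarrow> 'a \<Rightarrow> 'a" where
  "reverse_order C x = (let cs = sorted_list_of_set C in
     if x \<in> C then rev cs ! (THE i. i < length cs \<and> cs ! i = x) else x)"

lemma rho_reverse_order: "rho P = reverse_order (closers P)"
  by (simp add: rho_def reverse_order_def fun_eq_iff)

lemma reverse_order_outside: "x \<notin> C \<Longrightarrow> reverse_order C x = x"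
  by (simp add: reverse_order_def)

lemma reverse_order_nth:
  assumes "finite C" and i: "i < card C"
  shows "reverse_order C (sorted_list_of_set C ! i) = sorted_list_of_set C ! (card C - Suc i)"
proof -
  let ?cs = "sorted_list_of_set C"
  have len: "length ?cs = card C" by simp
  have mem: "?cs ! i \<in> C" using assms by (metis len nth_mem set_sorted_list_of_set)
  have "(THE j. j < length ?cs \<and> ?cs ! j = ?cs ! i) = i"
    using i by (intro the_equality) (auto simp: nth_eq_iff_index_eq)
  then show ?thesis using mem i by (simp add: reverse_order_def rev_nth)
qed

lemma reverse_order_in_set:
  assumes "finite C" and x: "x \<in> C"
  obtains i where "i < card C" "x = sorted_list_of_set C ! i"
  using x assms by (metis in_set_conv_nth length_sorted_list_of_set set_sorted_list_of_set)

lemma reverse_order_maps_into: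
  assumes "finite C" and "x \<in> C"
  shows "reverse_order C x \<in> C"
proof -
  obtain i where "i < card C" "x = sorted_list_of_set C ! i" using reverse_order_in_set assms .
  moreover have "card C - Suc i < length (sorted_list_of_set C)" using \<open>i < card C\<close> by simp
  ultimately show ?thesis using assms(1)
    by (metis nth_mem reverse_order_nth set_sorted_list_of_set)
qed

lemma reverse_order_involution:
  assumes "finite C"
  shows "reverse_order C (reverse_order C x) = x"
proof (cases "x \<in> C")
  case True
  obtain i where i: "i < card C" "x = sorted_list_of_set C ! i"
    using reverse_order_in_set assms True .
  then have "card C - Suc (card C - Suc i) = i" by simp
  then show ?thesis using i assms by (simp add: reverse_order_nth)
qed (simp add: reverse_order_outside)

lemma reverse_order_antitone:
  assumes "finite C" and "x \<in> C" "y \<in> C" "x < y"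
  shows "reverse_order C y < reverse_order C x"
proof -
  let ?cs = "sorted_list_of_set C"
  obtain i where i: "i < card C" "x = ?cs ! i" using reverse_order_in_set assms(1,2) .
  obtain j where j: "j < card C" "y = ?cs ! j" using reverse_order_in_set assms(1,3) .
  have sorted: "sorted_wrt (<) ?cs" by (rule strict_sorted_list_of_set)
  have "i < j"
    using sorted i j \<open>x < y\<close> by (metis length_sorted_list_of_set linorder_neqE_nat
        order_less_asym sorted_wrt_nth_less)
  then have "?cs ! (card C - Suc j) < ?cs ! (card C - Suc i)"
    using sorted_wrt_nth_less[OF sorted, of "card C - Suc j" "card C - Suc i"] i j by simp
  then show ?thesis using i j assms(1) by (simp add: reverse_order_nth)
qed

lemma matching_blocks:
  assumes "\<forall>B\<in>P. card B = 1 \<or> card B = 2"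
  shows "P = (\<lambda>(a, b). {a, b}) ` arcs P \<union> (\<lambda>x. {x}) ` fixed_points P"
proof (intro equalityI subsetI)
  fix B assume B: "B \<in> P"
  then consider x where "B = {x}" | i j where "B = {i, j}" "i < j"
    using assms by (auto simp: card_1_singleton_iff card_2_iff) (metis insert_commute neq_iff)
  then show "B \<in> (\<lambda>(a, b). {a, b}) ` arcs P \<union> (\<lambda>x. {x}) ` fixed_points P"
    by cases (use B in \<open>force simp: arcs_def fixed_points_def\<close>)+
qed (auto simp: arcs_def fixed_points_def)

lemma fixed_point_not_closer:
  assumes "partition_on A P" and "x \<in> fixed_points P"
  shows "x \<notin> closers P"
proof
  assume "x \<in> closers P"
  then obtain i where "i < x" "{i, x} \<in> P" by (auto simp: closers_def arcs_def)
  moreover have "{x} \<in> P" using assms(2) by (simp add: fixed_points_def)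
  moreover have "{i, x} \<noteq> {x}" using \<open>i < x\<close> by auto
  ultimately show False
    using disjointD[OF partition_onD2[OF assms(1)]] by blast
qed

definition map_closer :: "(nat \<Rightarrow> nat) \<Rightarrow> nat \<times> nat \<Rightarrow> nat \<times> nat" where
  "map_closer f = (\<lambda>(a, b). (a, f b))"

lemma map_closer_image:
  "map_closer f ` (\<lambda>k. (a k, b k)) ` K = (\<lambda>k. (a k, f (b k))) ` K"
  by (auto simp: map_closer_def image_image)

lemma arc_opener_closer: "(a, b) \<in> arcs P \<Longrightarrow> a \<in> openers P \<and> b \<in> closers P"
  by (force simp: openers_def closers_def)

lemma map_closer_involution:
  assumes "\<And>x. f (f x) = x"
  shows "map_closer f ` map_closer f ` S = S"
  using assms by (simp add: image_image map_closer_def split_def)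

lemma crossing_to_nesting:
  assumes "0 < t" and S: "is_crossing P t S"
    and below: "\<forall>x\<in>openers P. \<forall>c\<in>closers P. x < c"
    and maps: "\<forall>c\<in>closers P. f c \<in> closers P"
    and anti: "\<forall>x\<in>closers P. \<forall>y\<in>closers P. x < y \<longrightarrow> f y < f x"
    and arcs: "map_closer f ` arcs P \<subseteq> arcs Q"
  shows "is_nesting Q t (map_closer f ` S)"
proof -
  obtain a b where sub: "S \<subseteq> arcs P" and S_eq: "S = (\<lambda>k. (a k, b k)) ` {..<t}"
    and inc: "\<forall>k. Suc k < t \<longrightarrow> a k < a (Suc k) \<and> b k < b (Suc k)"
    using S unfolding is_crossing_def by blast
  have arc: "a k \<in> openers P \<and> b k \<in> closers P" if "k < t" for k
    using that sub S_eq arc_opener_closer by blast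
  have "\<forall>k. Suc k < t \<longrightarrow> a k < a (Suc k) \<and> f (b (Suc k)) < f (b k)"
    using inc anti arc by (meson Suc_lessD lessI)
  moreover have "a (t - 1) < f (b (t - 1))"
    using arc[of "t - 1"] \<open>0 < t\<close> below maps by simp
  moreover have "map_closer f ` S \<subseteq> arcs Q" using sub arcs by blast
  ultimately show ?thesis unfolding is_nesting_def S_eq map_closer_image
    by (intro conjI exI[of _ a] exI[of _ "\<lambda>k. f (b k)"]) simp_all
qed

lemma nesting_to_crossing:
  assumes "0 < t" and S: "is_nesting P t S"
    and below: "\<forall>x\<in>openers P. \<forall>c\<in>closers P. x < c"
    and maps: "\<forall>c\<in>closers P. f c \<in> closers P"
    and anti: "\<forall>x\<in>closers P. \<forall>y\<in>closers P. x < y \<longrightarrow> f y < f x"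
    and arcs: "map_closer f ` arcs P \<subseteq> arcs Q"
  shows "is_crossing Q t (map_closer f ` S)"
proof -
  obtain a b where sub: "S \<subseteq> arcs P" and S_eq: "S = (\<lambda>k. (a k, b k)) ` {..<t}"
    and inc: "\<forall>k. Suc k < t \<longrightarrow> a k < a (Suc k) \<and> b (Suc k) < b k"
    using S unfolding is_nesting_def by blast
  have arc: "a k \<in> openers P \<and> b k \<in> closers P" if "k < t" for k
    using that sub S_eq arc_opener_closer by blast
  have "\<forall>k. Suc k < t \<longrightarrow> a k < a (Suc k) \<and> f (b k) < f (b (Suc k))"
    using inc anti arc by (meson Suc_lessD lessI)
  moreover have "a (t - 1) < f (b 0)"
    using arc[of "t - 1"] arc[of 0] \<open>0 < t\<close> below maps by simp
  moreover have "map_closer f ` S \<subseteq> arcs Q" using sub arcs by blast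
  ultimately show ?thesis unfolding is_crossing_def S_eq map_closer_image
    by (intro conjI exI[of _ a] exI[of _ "\<lambda>k. f (b k)"]) simp_all
qed

lemma card_eq_by_involution:
  assumes inv: "\<And>x. g (g x) = x" and "g ` A \<subseteq> B" and "g ` B \<subseteq> A"
  shows "card A = card B"
proof -
  have "B \<subseteq> g ` A"
  proof
    fix x assume "x \<in> B"
    then show "x \<in> g ` A" using inv[of x] \<open>g ` B \<subseteq> A\<close> by (metis image_eqI image_subset_iff)
  qed
  then have "B = g ` A" using \<open>g ` A \<subseteq> B\<close> by blast
  moreover have "inj g" by (metis inv injI)
  ultimately show ?thesis by (simp add: card_image inj_on_subset)
qed

locale opener_closer_matching =
  fixes m :: nat and P :: "nat set set"
  assumes matching: "partial_matching m P"
    and openers_below: "\<forall>x\<in>openers P. \<forall>c\<in>closers P. x < c"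
begin

abbreviation f :: "nat \<Rightarrow> nat" where "f \<equiv> rho P"

lemma partition: "partition_on {1..m} P"
  using matching by (simp add: partial_matching_def)

lemma closers_subset: "closers P \<subseteq> {1..m}"
proof
  fix c assume "c \<in> closers P"
  then obtain a where "{a, c} \<in> P" by (auto simp: closers_def arcs_def)
  then show "c \<in> {1..m}" using partition_onD1[OF partition] by blast
qed

lemma finite_closers: "finite (closers P)"
  using closers_subset finite_subset by blast

lemma rho_closer: "c \<in> closers P \<Longrightarrow> f c \<in> closers P"
  by (simp add: rho_reverse_order reverse_order_maps_into finite_closers)

lemma rho_fixes: "x \<notin> closers P \<Longrightarrow> f x = x"
  by (simp add: rho_reverse_order reverse_order_outside)

lemma rho_involution: "f (f x) = x"
  by (simp add: rho_reverse_order reverse_order_involution finite_closers)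

lemma rho_antitone: "x \<in> closers P \<Longrightarrow> y \<in> closers P \<Longrightarrow> x < y \<Longrightarrow> f y < f x"
  by (simp add: rho_reverse_order reverse_order_antitone finite_closers)

lemma rho_image_closers: "f ` closers P = closers P"
proof (intro equalityI subsetI)
  fix c assume "c \<in> closers P"
  then show "c \<in> f ` closers P" using rho_closer rho_involution[of c] by (metis imageI)
qed (auto simp: rho_closer)

lemma rho_image_range: "f ` {1..m} = {1..m}"
proof -
  have into: "f x \<in> {1..m}" if "x \<in> {1..m}" for x
    using that rho_closer rho_fixes closers_subset by (cases "x \<in> closers P") (blast, simp)
  show ?thesis
  proof (intro equalityI subsetI)
    fix x assume "x \<in> {1..m}"
    then show "x \<in> f ` {1..m}" using into rho_involution[of x] by (metis imageI)
  qed (use into in blast)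
qed

text \<open>Openers and fixed points are not closers, hence fixed by f.\<close>
lemma opener_fixed: "(a, b) \<in> arcs P \<Longrightarrow> f a = a"
  using arc_opener_closer openers_below rho_fixes by blast

lemma fixed_point_fixed: "x \<in> fixed_points P \<Longrightarrow> f x = x"
  using fixed_point_not_closer[OF partition] rho_fixes by blast

lemma Phi_image: "Phi P = (`) f ` P"
proof -
  have blocks: "P = (\<lambda>(a, b). {a, b}) ` arcs P \<union> (\<lambda>x. {x}) ` fixed_points P"
    using matching matching_blocks[of P] by (simp add: partial_matching_def)
  have arc_blocks: "(`) f ` (\<lambda>(a, b). {a, b}) ` arcs P = (\<lambda>(a, b). {a, f b}) ` arcs P"
    unfolding image_image by (intro image_cong) (auto simp: opener_fixed)
  have fixed_blocks: "(`) f ` (\<lambda>x. {x}) ` fixed_points P = (\<lambda>x. {x}) ` fixed_points P"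
    unfolding image_image by (intro image_cong) (auto simp: fixed_point_fixed)
  have "Phi P = (\<lambda>(a, b). {a, f b}) ` arcs P \<union> (\<lambda>x. {x}) ` fixed_points P"
    by (auto simp: Phi_def)
  also have "\<dots> = (`) f ` P"
    by (subst (2) blocks) (simp only: image_Un arc_blocks fixed_blocks)
  finally show ?thesis .
qed

lemma arcs_Phi: "arcs (Phi P) = map_closer f ` arcs P"
proof (intro equalityI subsetI)
  fix q assume "q \<in> arcs (Phi P)"
  then obtain i j where q: "q = (i, j)" "i < j" "{i, j} \<in> Phi P" by (auto simp: arcs_def)
  then obtain a b where ab: "(a, b) \<in> arcs P" "{i, j} = {a, f b}"
    by (auto simp: Phi_def doubleton_eq_iff)
  have "a < f b" using ab(1) arc_opener_closer openers_below rho_closer by blast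
  then have "i = a \<and> j = f b" using q(2) ab(2) by (auto simp: doubleton_eq_iff)
  then show "q \<in> map_closer f ` arcs P" using q ab(1) by (force simp: map_closer_def)
next
  fix q assume "q \<in> map_closer f ` arcs P"
  then obtain a b where ab: "(a, b) \<in> arcs P" "q = (a, f b)" by (auto simp: map_closer_def)
  have "a < f b" using ab(1) arc_opener_closer openers_below rho_closer by blast
  then show "q \<in> arcs (Phi P)" using ab by (auto simp: arcs_def Phi_def)
qed

lemma closers_Phi: "closers (Phi P) = closers P"
proof -
  have "snd \<circ> map_closer f = f \<circ> snd" by (auto simp: map_closer_def)
  then have "closers (Phi P) = f ` closers P"
    by (simp only: closers_def arcs_Phi image_comp)
  then show ?thesis by (simp only: rho_image_closers)
qed

lemma openers_Phi: "openers (Phi P) = openers P"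
proof -
  have "fst \<circ> map_closer f = fst" by (auto simp: map_closer_def)
  then show ?thesis by (simp only: openers_def arcs_Phi image_comp)
qed

lemma rho_Phi: "rho (Phi P) = f"
  by (simp add: rho_reverse_order closers_Phi)

text \<open>Phi P is a partial matching of [m], being the image of P under a permutation of [m].\<close>
lemma Phi_matching: "partial_matching m (Phi P)"
proof -
  have inj: "inj f" by (metis rho_involution injI)
  have "partition_on (f ` {1..m}) ((`) f ` P - {{}})"
    using partition_on_inj_image[OF partition] inj by (meson inj_on_subset subset_UNIV)
  moreover have "{} \<notin> (`) f ` P" using partition_onD3[OF partition] by auto
  ultimately have "partition_on {1..m} (Phi P)"
    unfolding Phi_image by (metis Diff_empty Diff_insert0 rho_image_range)
  moreover have "\<forall>B\<in>Phi P. card B = 1 \<or> card B = 2"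
    using matching inj by (auto simp: Phi_image partial_matching_def card_image inj_on_subset)
  ultimately show ?thesis by (simp add: partial_matching_def)
qed

lemma Phi_opener_closer_matching: "opener_closer_matching m (Phi P)"
  using Phi_matching openers_below by unfold_locales (simp_all add: openers_Phi closers_Phi)

text \<open>Phi is an involution, because Phi P has the same reversal map f.\<close>
lemma Phi_Phi: "Phi (Phi P) = P"
proof -
  interpret Phi: opener_closer_matching m "Phi P" by (rule Phi_opener_closer_matching)
  have "Phi (Phi P) = (`) f ` Phi P" using Phi.Phi_image by (simp only: rho_Phi)
  then show ?thesis unfolding Phi_image by (simp add: image_image rho_involution)
qed

lemma Phi_arcs_back: "map_closer f ` arcs (Phi P) = arcs P"
  using map_closer_involution[of f] by (simp add: arcs_Phi rho_involution)

text \<open>Moving closers by f is a bijection from t-crossings of P onto t-nestings of Phi P.\<close>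
lemma ne_Phi:
  assumes "0 < t"
  shows "ne t (Phi P) = cr t P"
  unfolding ne_def cr_def
proof (rule sym, rule card_eq_by_involution[of "(`) (map_closer f)"])
  interpret Phi: opener_closer_matching m "Phi P" by (rule Phi_opener_closer_matching)
  show "map_closer f ` map_closer f ` S = S" for S
    using map_closer_involution rho_involution by blast
  show "(`) (map_closer f) ` {S. is_crossing P t S} \<subseteq> {S. is_nesting (Phi P) t S}"
    using crossing_to_nesting[OF assms _ openers_below] rho_closer rho_antitone arcs_Phi by blast
  show "(`) (map_closer f) ` {S. is_nesting (Phi P) t S} \<subseteq> {S. is_crossing P t S}"
    using nesting_to_crossing[OF assms _ Phi.openers_below] rho_closer rho_antitone Phi_arcs_back
    by (auto simp: closers_Phi)
qed

text \<open>Since Phi is an involution, the dual statement follows by applying \<open>ne_Phi\<close> to Phi P.\<close>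
lemma cr_Phi:
  assumes "0 < t"
  shows "cr t (Phi P) = ne t P"
proof -
  interpret Phi: opener_closer_matching m "Phi P" by (rule Phi_opener_closer_matching)
  show ?thesis using Phi.ne_Phi[OF assms] by (simp add: Phi_Phi)
qed

end

lemma POC_opener_closer_matching: "P \<in> POC m \<Longrightarrow> opener_closer_matching m P"
  by unfold_locales (simp_all add: POC_def)

lemma Phi_POC:
  assumes "P \<in> POC m"
  shows "Phi P \<in> POC m"
proof -
  interpret opener_closer_matching m P using assms by (rule POC_opener_closer_matching)
  have "arcs (Phi P) \<noteq> {}" using assms by (simp add: arcs_Phi POC_def)
  then show ?thesis
    using assms Phi_matching by (simp add: POC_def openers_Phi closers_Phi)
qed

theorem mainTheorem3:
  fixes m :: nat
  assumes "m \<ge> 2"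
  shows "(\<forall>P\<in>POC m. Phi P \<in> POC m \<and> Phi (Phi P) = P) \<and>
         (\<forall>P\<in>POC m. \<forall>t\<ge>2. ne t (Phi P) = cr t P \<and> cr t (Phi P) = ne t P)"
proof -
  have involution: "Phi P \<in> POC m \<and> Phi (Phi P) = P" if "P \<in> POC m" for P
  proof -
    interpret opener_closer_matching m P using that by (rule POC_opener_closer_matching)
    show ?thesis using Phi_POC[OF that] Phi_Phi by simp
  qed
  have statistics: "ne t (Phi P) = cr t P \<and> cr t (Phi P) = ne t P"
    if "P \<in> POC m" and "2 \<le> t" for P t
  proof -
    interpret opener_closer_matching m P using that(1) by (rule POC_opener_closer_matching)
    show ?thesis using ne_Phi cr_Phi that(2) by simp
  qed
  show ?thesis using involution statistics by blast
qed

end
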